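(* Let $k$ be a field of characteristic $0$, $n\geq3$, let $\phi'$ be a regular quadratic form over $k$ in $n-2$ variables, $\phi=\langle1\rangle\perp(-\phi')$, and let $X\subset\mathbb A^n_k$ be the zero locus of $x_1x_2-\phi(1,x_3,\dots,x_n)$. Let $(R,m,\kappa)$ be a discrete valuation ring containing $k$, with fraction field $K$ and valuation $v$. Let $h\in X(K)$ with $h_i=h^*(x_i)$, and suppose $\phi_\kappa$ is anisotropic. (1) If $h$ lifts to $X({\rm Spec}\,R)$, then $v(h_1)=v(h_2)=0$. (2) If $h$ does not lift to $X({\rm Spec}\,R)$, then $v(h_1)<0$ or $v(h_2)<0$, and $\min\{v(h_1),v(h_2)\}=\min\{v(h_1),v(h_2),\dots,v(h_n)\}$.
   Context: $\phi_\kappa$ is the base change of $\phi$ to the residue field $\kappa$; $\langle 1\rangle$ is the form $x^2$ and $\perp$ the orthogonal sum. *)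

theory Defs
  imports "HOL-Library.Extended_Real"
begin

definition subfield :: "'a::field set \<Rightarrow> bool" where
  "subfield k \<longleftrightarrow> 0 \<in> k \<and> 1 \<in> k \<and>
     (\<forall>x\<in>k. \<forall>y\<in>k. x + y \<in> k \<and> x * y \<in> k \<and> - x \<in> k) \<and>
     (\<forall>x\<in>k. x \<noteq> 0 \<longrightarrow> inverse x \<in> k)"

text \<open>Its valuation ring
  R = {x. v x \<ge> 0} is a discrete valuation ring with fraction field K.\<close>
definition discrete_valuation :: "('a::field \<Rightarrow> ereal) \<Rightarrow> bool" where
  "discrete_valuation v \<longleftrightarrow>
     v 0 = \<infinity> \<and>
     (\<forall>x. x \<noteq> 0 \<longrightarrow> (\<exists>z::int. v x = ereal (of_int z))) \<and>
     (\<forall>x y. v (x * y) = v x + v y) \<and>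
     (\<forall>x y. min (v x) (v y) \<le> v (x + y)) \<and>
     (\<exists>t. v t = 1)"

definition qform :: "(nat \<Rightarrow> nat \<Rightarrow> 'a::comm_ring_1) \<Rightarrow> nat \<Rightarrow> (nat \<Rightarrow> 'a) \<Rightarrow> 'a" where
  "qform a n x = (\<Sum>i\<in>{3..n}. \<Sum>j\<in>{3..n}. a i j * x i * x j)"

text \<open>phi = <1> \<perp> (-phi'), in the variables x_1, x_3, ..., x_n.\<close>
definition phi :: "(nat \<Rightarrow> nat \<Rightarrow> 'a::comm_ring_1) \<Rightarrow> nat \<Rightarrow> (nat \<Rightarrow> 'a) \<Rightarrow> 'a" where
  "phi a n x = x 1 ^ 2 - qform a n x"

definition regular_qform :: "'a::field set \<Rightarrow> (nat \<Rightarrow> nat \<Rightarrow> 'a) \<Rightarrow> nat \<Rightarrow> bool" where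
  "regular_qform k a n \<longleftrightarrow>
     (\<forall>i\<in>{3..n}. \<forall>j\<in>{3..n}. a i j \<in> k \<and> a i j = a j i) \<and>
     (\<forall>x. (\<forall>i\<in>{3..n}. x i \<in> k) \<longrightarrow>
          (\<forall>j\<in>{3..n}. (\<Sum>i\<in>{3..n}. a i j * x i) = 0) \<longrightarrow>
          (\<forall>i\<in>{3..n}. x i = 0))"

text \<open>The base change of phi to the residue field kappa = R/m is anisotropic:
  unfolded, a nonzero vector over kappa is the reduction of a vector y over R
  with some coordinate a unit, and phi_kappa(y mod m) = 0 iff phi(y) \<in> m.\<close>
definition residually_anisotropic :: "('a::field \<Rightarrow> ereal) \<Rightarrow> (nat \<Rightarrow> nat \<Rightarrow> 'a) \<Rightarrow> nat \<Rightarrow> bool" where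
  "residually_anisotropic v a n \<longleftrightarrow>
     (\<forall>y. (\<forall>i\<in>insert 1 {3..n}. 0 \<le> v (y i)) \<longrightarrow>
          (\<exists>i\<in>insert 1 {3..n}. v (y i) = 0) \<longrightarrow>
          v (phi a n y) = 0)"

end

theory Submission
  imports Defs
begin

text \<open>Scaling the vector (1, h_3, ..., h_n) by a power of a uniformizer makes it primitive, so
  residual anisotropy gives v(phi(1, h_3, ..., h_n)) = 2M, where M \<le> 0 is the least valuation
  of 1, h_3, ..., h_n. Hence v(h_1) + v(h_2) = 2M while v(h_i) \<ge> M for i \<ge> 3, and both parts
  follow: min(v(h_1), v(h_2)) \<le> M is the least valuation of all coordinates, and if all
  coordinates are integral then v(h_1), v(h_2) \<ge> 0 with sum 2M \<le> 0 forces both to vanish.\<close>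

lemma min_le_of_add_eq_twice:
  fixes p q M :: ereal
  assumes "p + q = 2 * M"
  shows "min p q \<le> M"
  using assms by (cases p; cases q; cases M) (auto simp: min_def)

lemma nonneg_zero_of_add_eq_twice_nonpos:
  fixes p q M :: ereal
  assumes "p + q = 2 * M" "0 \<le> p" "0 \<le> q" "M \<le> 0"
  shows "p = 0" "q = 0"
  using assms by (cases p; cases q; cases M; auto)+

lemma phi_homogeneous:
  fixes a :: "nat \<Rightarrow> nat \<Rightarrow> 'a::comm_ring_1"
  shows "phi a n (\<lambda>i. c * y i) = c\<^sup>2 * phi a n y"
  unfolding phi_def qform_def
  by (simp add: sum_distrib_left power2_eq_square algebra_simps)

context
  fixes v :: "'a::field \<Rightarrow> ereal"
  assumes v: "discrete_valuation v"
begin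

lemma discrete_valuation_mult: "v (x * y) = v x + v y"
  using v unfolding discrete_valuation_def by blast

lemma discrete_valuation_int: "x \<noteq> 0 \<Longrightarrow> \<exists>m::int. v x = ereal (of_int m)"
  using v unfolding discrete_valuation_def by blast

lemma discrete_valuation_zero: "v 0 = \<infinity>"
  using v unfolding discrete_valuation_def by blast

lemma discrete_valuation_one: "v 1 = 0"
proof -
  obtain m :: int where "v 1 = ereal (of_int m)"
    using discrete_valuation_int[of 1] by auto
  moreover have "v 1 = v 1 + v 1"
    using discrete_valuation_mult[of 1 1] by simp
  ultimately show ?thesis by simp
qed

lemma discrete_valuation_neq_minf: "v x \<noteq> -\<infinity>"
  using discrete_valuation_int[of x] discrete_valuation_zero by (cases "x = 0") auto

lemma discrete_valuation_power:
  assumes "v x = ereal r"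
  shows "v (x ^ k) = ereal (of_nat k * r)"
proof (induction k)
  case 0
  then show ?case by (simp add: discrete_valuation_one)
next
  case (Suc k)
  then show ?case by (simp add: discrete_valuation_mult assms algebra_simps)
qed

lemma discrete_valuation_attains: "\<exists>c. v c = ereal (of_int m)"
proof -
  obtain t where t: "v t = 1"
    using v unfolding discrete_valuation_def by blast
  then have "t \<noteq> 0"
    using discrete_valuation_zero by auto
  then have "v t + v (inverse t) = 0"
    by (simp flip: discrete_valuation_mult add: discrete_valuation_one)
  then have t_inv: "v (inverse t) = - 1"
    using t by (cases "v (inverse t)") (auto simp: one_ereal_def)
  show ?thesis
  proof (cases "0 \<le> m")
    case True
    then show ?thesis
      using discrete_valuation_power[of t 1 "nat m"] t by (auto simp: one_ereal_def)
  next
    case False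
    then show ?thesis
      using discrete_valuation_power[of "inverse t" "- 1" "nat (- m)"] t_inv
      by (auto simp: one_ereal_def)
  qed
qed

lemma residually_anisotropic_valuation_phi:
  assumes anis: "residually_anisotropic v a n"
    and nonzero: "\<exists>i\<in>insert 1 {3..n}. y i \<noteq> 0"
  shows "v (phi a n y) = 2 * Min (v ` y ` insert 1 {3..n})"
proof -
  define T where "T = insert (1::nat) {3..n}"
  define M where "M = Min (v ` y ` T)"
  have M_le: "M \<le> v (y i)" if "i \<in> T" for i
    using that unfolding M_def T_def by (intro Min_le) auto
  have "M \<in> v ` y ` T"
    unfolding M_def T_def by (intro Min_in) auto
  then obtain j where "j \<in> T" and M_eq: "M = v (y j)"
    by blast
  obtain i where "i \<in> T" "y i \<noteq> 0"
    using nonzero unfolding T_def by blast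
  then obtain r :: int where "v (y i) = ereal (of_int r)"
    using discrete_valuation_int by blast
  then have "M \<noteq> \<infinity>"
    using M_le[OF \<open>i \<in> T\<close>] by auto
  then have "y j \<noteq> 0"
    using M_eq discrete_valuation_zero by auto
  then obtain m :: int where M_int: "M = ereal (of_int m)"
    using M_eq discrete_valuation_int by auto
  obtain c where c: "v c = ereal (of_int (- m))"
    using discrete_valuation_attains by blast
  have "v (phi a n (\<lambda>i. c * y i)) = 0"
    using anis unfolding residually_anisotropic_def
  proof (elim allE impE)
    show "\<forall>i\<in>insert 1 {3..n}. 0 \<le> v (c * y i)"
    proof
      fix i assume "i \<in> insert 1 {3..n}"
      then have "ereal (of_int m) \<le> v (y i)"
        using M_le unfolding T_def M_int by blast
      then show "0 \<le> v (c * y i)"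
        using discrete_valuation_neq_minf[of "y i"]
        by (cases "v (y i)") (auto simp: discrete_valuation_mult c)
    qed
    show "\<exists>i\<in>insert 1 {3..n}. v (c * y i) = 0"
      using \<open>j \<in> T\<close> M_eq unfolding T_def
      by (intro bexI[of _ j]) (auto simp: discrete_valuation_mult c M_int simp flip: M_eq)
  qed
  then have "v c + v c + v (phi a n y) = 0"
    by (simp add: phi_homogeneous power2_eq_square discrete_valuation_mult)
  then have "v (phi a n y) = 2 * M"
    using discrete_valuation_neq_minf[of "phi a n y"]
    by (cases "v (phi a n y)") (auto simp: c M_int)
  then show ?thesis
    unfolding M_def T_def .
qed

end

theorem lemma4p7:
  fixes k :: "'a::field_char_0 set"
    and v :: "'a \<Rightarrow> ereal"
    and a :: "nat \<Rightarrow> nat \<Rightarrow> 'a"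
    and n :: nat
    and h :: "nat \<Rightarrow> 'a"
  assumes "subfield k"
    and "n \<ge> 3"
    and "regular_qform k a n"
    and "discrete_valuation v"
    and "\<forall>c\<in>k. 0 \<le> v c"
    and "h 1 * h 2 = phi a n (h(1 := 1))"
    and "residually_anisotropic v a n"
  shows "((\<forall>i\<in>{1..n}. 0 \<le> v (h i)) \<longrightarrow> v (h 1) = 0 \<and> v (h 2) = 0) \<and>
         (\<not> (\<forall>i\<in>{1..n}. 0 \<le> v (h i)) \<longrightarrow>
            (v (h 1) < 0 \<or> v (h 2) < 0) \<and>
            min (v (h 1)) (v (h 2)) = Min (v ` h ` {1..n}))"
proof -
  define y where "y = h(1 := 1)"
  define M where "M = Min (v ` y ` insert 1 {3..n})"
  have M_le: "M \<le> v (y i)" if "i \<in> insert 1 {3..n}" for i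
    using that unfolding M_def by (intro Min_le) auto
  have M_nonpos: "M \<le> 0"
    using M_le[of 1] discrete_valuation_one[OF assms(4)] by (simp add: y_def)
  have "v (phi a n y) = 2 * M"
    unfolding M_def
    by (rule residually_anisotropic_valuation_phi[OF assms(4,7)]) (auto simp: y_def)
  then have sum: "v (h 1) + v (h 2) = 2 * M"
    using assms(6) discrete_valuation_mult[OF assms(4)] by (metis y_def)
  have min_le_all: "min (v (h 1)) (v (h 2)) \<le> v (h i)" if "i \<in> {1..n}" for i
  proof (cases "i \<in> {1, 2}")
    case False
    then have "M \<le> v (h i)"
      using that M_le[of i] by (simp add: y_def)
    with min_le_of_add_eq_twice[OF sum] show ?thesis
      by order
  qed auto
  have min_eq: "min (v (h 1)) (v (h 2)) = Min (v ` h ` {1..n})"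
    using min_le_all assms(2) by (intro Min_eqI[symmetric]) (auto simp: min_def)
  show ?thesis
  proof (intro conjI impI)
    assume "\<forall>i\<in>{1..n}. 0 \<le> v (h i)"
    then show "v (h 1) = 0" "v (h 2) = 0"
      using nonneg_zero_of_add_eq_twice_nonpos[OF sum _ _ M_nonpos] assms(2) by auto
  next
    assume "\<not> (\<forall>i\<in>{1..n}. 0 \<le> v (h i))"
    then obtain i where "i \<in> {1..n}" "v (h i) < 0"
      by force
    then show "v (h 1) < 0 \<or> v (h 2) < 0"
      using min_le_all by (fastforce simp: min_def split: if_splits)
    show "min (v (h 1)) (v (h 2)) = Min (v ` h ` {1..n})"
      by (rule min_eq)
  qed
qed

end
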